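(* Let $N\ge2$, $a\ge0$, and let $(X_t)_{t\ge0}$ be the continuous-time Markov chain on $\{0,1,\dots,N\}$ with transitions $j\to j-1$ at rate $j$ and $j\to j+1$ at rate $a\,\frac{j(j-1)(N-j)}{N(N-1)}$, started from $X_0=N$. For $j=1,\dots,N$ let $\tau_j=\int_0^\infty P(X_t=j\mid X_0=N)\,dt$. Then $$\sum_{j=1}^N j\,\tau_j \le \sum_{j=1}^N\sum_{i=0}^j (a/4)^i.$$
   Context: The chain $X_t$ is the number of individuals in a single patch of the contact process with sexual reproduction in the absence of migrations (outer birth parameter $b=0$); $\tau_j$ is the expected total time spent in state $j$. *)

theory Defs
  imports "HOL-Analysis.Analysis"
begin

definition death_rate :: "nat \<Rightarrow> real" where
  "death_rate j = real j"

definition birth_rate :: "nat \<Rightarrow> real \<Rightarrow> nat \<Rightarrow> real" where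
  "birth_rate N a j = a * (real j * (real j - 1) * (real N - real j)) / (real N * (real N - 1))"

definition gen :: "nat \<Rightarrow> real \<Rightarrow> nat \<Rightarrow> nat \<Rightarrow> real" where
  "gen N a i j =
     (if i \<le> N \<and> j \<le> N then
        (if j = Suc i then birth_rate N a i
         else if Suc j = i then death_rate i
         else if i = j then - (birth_rate N a i + death_rate i)
         else 0)
      else 0)"

fun matpow :: "nat \<Rightarrow> (nat \<Rightarrow> nat \<Rightarrow> real) \<Rightarrow> nat \<Rightarrow> nat \<Rightarrow> nat \<Rightarrow> real" where
  "matpow N M 0 i j = (if i = j then 1 else 0)"
| "matpow N M (Suc k) i j = (\<Sum>l\<in>{0..N}. matpow N M k i l * M l j)"

definition trans_prob :: "nat \<Rightarrow> real \<Rightarrow> real \<Rightarrow> nat \<Rightarrow> nat \<Rightarrow> real" where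
  "trans_prob N a t i j = (\<Sum>k. t ^ k / fact k * matpow N (gen N a) k i j)"

definition occ_time :: "nat \<Rightarrow> real \<Rightarrow> nat \<Rightarrow> ennreal" where
  "occ_time N a j = (\<integral>\<^sup>+ t. ennreal (trans_prob N a t N j) * indicator {0..} t \<partial>lborel)"

end

theory Submission
  imports Defs
begin

text \<open>Let Q be the generator, D(n) = sum of (a/4)^m over m \<le> n, and take the Lyapunov
  function h(j) = D(N-1) + ... + D(N-j).
  The birth rate at j is at most j a/4 (AM-GM), and D(n+1) = 1 + (a/4) D(n); together these give
  the drift bound (Q h)(j) \<le> -j. By the forward equation d/dt E h(X_t) = E (Q h)(X_t) \<le> -E X_t,
  so integrating over [0, T] and using h \<ge> 0 bounds the integral of E X_t over [0, T] by h(N);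
  monotone convergence lets T go to infinity, and h(N) = D(0) + ... + D(N-1) is at most the
  stated double sum. The transition probabilities are the entries of exp(t Q), computed by its
  power series; they are nonnegative because exp(t Q) = exp(-c t) exp(t (Q + c I)) with Q + c I
  entrywise nonnegative for large c.\<close>

definition mat_exp :: "nat \<Rightarrow> (nat \<Rightarrow> nat \<Rightarrow> real) \<Rightarrow> real \<Rightarrow> nat \<Rightarrow> nat \<Rightarrow> real" where
  "mat_exp N M t i j = (\<Sum>k. t ^ k / fact k * matpow N M k i j)"

lemma trans_prob_eq_mat_exp: "trans_prob N a t = mat_exp N (gen N a) t"
  by (simp add: fun_eq_iff trans_prob_def mat_exp_def)

lemma matrix_block_bounded:
  fixes M :: "nat \<Rightarrow> nat \<Rightarrow> real"
  shows "\<exists>K. \<forall>l\<le>N. \<forall>j\<le>N. \<bar>M l j\<bar> \<le> K"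
proof (intro exI allI impI)
  fix l j assume "l \<le> N" "j \<le> N"
  then show "\<bar>M l j\<bar> \<le> Max ((\<lambda>(l, j). \<bar>M l j\<bar>) ` ({..N} \<times> {..N}))"
    by (intro Max_ge finite_imageI finite_cartesian_product) (auto simp: image_iff)
qed

lemma matpow_abs_le:
  assumes bound: "\<And>l j. l \<le> N \<Longrightarrow> j \<le> N \<Longrightarrow> \<bar>M l j\<bar> \<le> K" and "j \<le> N"
  shows "\<bar>matpow N M k i j\<bar> \<le> (real (Suc N) * K) ^ k"
  using \<open>j \<le> N\<close>
proof (induction k arbitrary: j)
  case 0
  then show ?case by simp
next
  case (Suc k)
  have "K \<ge> 0" using bound[of 0 0] by simp
  have "\<bar>matpow N M (Suc k) i j\<bar> \<le> (\<Sum>l\<in>{0..N}. \<bar>matpow N M k i l\<bar> * \<bar>M l j\<bar>)"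
    unfolding matpow.simps abs_mult[symmetric] by (rule sum_abs)
  also have "\<dots> \<le> (\<Sum>l\<in>{0..N}. (real (Suc N) * K) ^ k * K)"
    using Suc bound \<open>K \<ge> 0\<close> by (intro sum_mono mult_mono) auto
  also have "\<dots> = (real (Suc N) * K) ^ Suc k"
    by (simp add: algebra_simps)
  finally show ?case .
qed

lemma summable_mat_exp_series:
  assumes "j \<le> N"
  shows "summable (\<lambda>k. norm (t ^ k / fact k * matpow N M k i j))"
proof -
  obtain K where K: "\<And>l j. l \<le> N \<Longrightarrow> j \<le> N \<Longrightarrow> \<bar>M l j\<bar> \<le> K"
    using matrix_block_bounded[of N M] by blast
  let ?x = "real (Suc N) * K * \<bar>t\<bar>"
  show ?thesis
  proof (rule summable_comparison_test)
    show "summable (\<lambda>k. inverse (fact k) * ?x ^ k)" by (rule summable_exp)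
    have "norm (norm (t ^ k / fact k * matpow N M k i j)) \<le> inverse (fact k) * ?x ^ k" for k
    proof -
      have "norm (norm (t ^ k / fact k * matpow N M k i j)) = \<bar>t\<bar> ^ k / fact k * \<bar>matpow N M k i j\<bar>"
        by (simp add: abs_mult power_abs)
      also have "\<dots> \<le> \<bar>t\<bar> ^ k / fact k * (real (Suc N) * K) ^ k"
        using matpow_abs_le[OF K assms] by (rule mult_left_mono) (auto intro: divide_nonneg_nonneg)
      also have "\<dots> = inverse (fact k) * ?x ^ k"
        by (simp add: power_mult_distrib divide_inverse mult_ac)
      finally show ?thesis .
    qed
    then show "\<exists>k0. \<forall>k\<ge>k0. norm (norm (t ^ k / fact k * matpow N M k i j)) \<le> inverse (fact k) * ?x ^ k"
      by blast
  qed
qed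

lemma mat_exp_powser: "mat_exp N M t i j = (\<Sum>k. matpow N M k i j / fact k * t ^ k)"
  by (simp add: mat_exp_def field_simps)

lemma mat_exp_0: "mat_exp N M 0 i j = (if i = j then 1 else 0)"
  unfolding mat_exp_powser powser_zero by simp

lemma mat_exp_has_derivative:
  assumes "j \<le> N"
  shows "((\<lambda>t. mat_exp N M t i j) has_real_derivative (\<Sum>l\<in>{0..N}. mat_exp N M t i l * M l j)) (at t)"
proof -
  let ?c = "\<lambda>l k. matpow N M k i l / fact k"
  have summable: "summable (\<lambda>k. ?c l k * t ^ k)" if "l \<le> N" for l t
    using summable_norm_cancel[OF summable_mat_exp_series[OF that, of t M i]]
    by (simp add: field_simps)
  have diffs: "diffs (?c j) k = (\<Sum>l\<in>{0..N}. ?c l k * M l j)" for k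
  proof -
    have "diffs (?c j) k = matpow N M (Suc k) i j / fact k"
      by (simp add: diffs_def fact_Suc del: of_nat_Suc)
    then show ?thesis
      by (simp add: sum_divide_distrib)
  qed
  have "((\<lambda>t. \<Sum>k. ?c j k * t ^ k) has_real_derivative (\<Sum>k. diffs (?c j) k * t ^ k)) (at t)"
    using summable[OF assms] by (intro termdiffs_strong_converges_everywhere)
  also have "(\<Sum>k. diffs (?c j) k * t ^ k) = (\<Sum>k. \<Sum>l\<in>{0..N}. ?c l k * t ^ k * M l j)"
    by (simp add: diffs sum_distrib_left mult_ac)
  also have "\<dots> = (\<Sum>l\<in>{0..N}. \<Sum>k. ?c l k * t ^ k * M l j)"
    using summable by (intro suminf_sum summable_mult2) auto
  also have "\<dots> = (\<Sum>l\<in>{0..N}. mat_exp N M t i l * M l j)"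
    using summable by (intro sum.cong refl) (simp add: mat_exp_powser suminf_mult2)
  finally show ?thesis by (simp add: mat_exp_powser)
qed

lemma continuous_on_mat_exp: "j \<le> N \<Longrightarrow> continuous_on S (\<lambda>t. mat_exp N M t i j)"
  by (intro continuous_at_imp_continuous_on ballI DERIV_isCont[OF mat_exp_has_derivative])

lemma choose_power_Suc:
  fixes c :: real
  shows "of_nat (Suc k choose m) * c ^ (Suc k - m)
    = (if m = 0 then 0 else of_nat (k choose (m - 1)) * c ^ (k - (m - 1))) + c * (of_nat (k choose m) * c ^ (k - m))"
proof (cases m)
  case 0
  then show ?thesis by simp
next
  case (Suc m')
  show ?thesis
  proof (cases "m' < k")
    case True
    then have "c ^ (k - m') = c * c ^ (k - Suc m')"
      by (metis Suc_diff_Suc power_Suc)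
    with Suc show ?thesis by (simp add: algebra_simps)
  next
    case False
    with Suc show ?thesis by (cases "m' = k") auto
  qed
qed

lemma binomial_sum_Suc:
  fixes c :: real and g :: "nat \<Rightarrow> real"
  shows "(\<Sum>m\<le>Suc k. of_nat (Suc k choose m) * c ^ (Suc k - m) * g m)
    = (\<Sum>m\<le>k. of_nat (k choose m) * c ^ (k - m) * g (Suc m)) + c * (\<Sum>m\<le>k. of_nat (k choose m) * c ^ (k - m) * g m)"
proof -
  have "(\<Sum>m\<le>Suc k. of_nat (Suc k choose m) * c ^ (Suc k - m) * g m)
      = (\<Sum>m\<le>Suc k. (if m = 0 then 0 else of_nat (k choose (m - 1)) * c ^ (k - (m - 1))) * g m)
        + (\<Sum>m\<le>Suc k. c * (of_nat (k choose m) * c ^ (k - m)) * g m)"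
    by (simp only: choose_power_Suc distrib_right sum.distrib)
  also have "(\<Sum>m\<le>Suc k. (if m = 0 then 0 else of_nat (k choose (m - 1)) * c ^ (k - (m - 1))) * g m)
      = (\<Sum>m\<le>k. of_nat (k choose m) * c ^ (k - m) * g (Suc m))"
    by (subst sum.atMost_Suc_shift) simp
  also have "(\<Sum>m\<le>Suc k. c * (of_nat (k choose m) * c ^ (k - m)) * g m)
      = c * (\<Sum>m\<le>k. of_nat (k choose m) * c ^ (k - m) * g m)"
    by (simp add: sum_distrib_left mult_ac)
  finally show ?thesis .
qed

lemma matpow_add_diag:
  assumes "j \<le> N"
  shows "matpow N (\<lambda>l j. M l j + (if l = j then c else 0)) k i j
    = (\<Sum>m\<le>k. of_nat (k choose m) * c ^ (k - m) * matpow N M m i j)"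
  using assms
proof (induction k arbitrary: j)
  case 0
  then show ?case by simp
next
  case (Suc k)
  let ?M' = "\<lambda>l j. M l j + (if l = j then c else 0)"
  let ?B = "\<lambda>m. of_nat (k choose m) * c ^ (k - m)"
  have delta: "(\<Sum>l\<in>{0..N}. x l * (if l = j then c else 0)) = c * x j" for x :: "nat \<Rightarrow> real"
  proof -
    have "(\<Sum>l\<in>{0..N}. x l * (if l = j then c else 0)) = (\<Sum>l\<in>{0..N}. if l = j then c * x l else 0)"
      by (intro sum.cong) auto
    then show ?thesis using Suc.prems by simp
  qed
  have "(\<Sum>l\<in>{0..N}. matpow N ?M' k i l * M l j) = (\<Sum>l\<in>{0..N}. \<Sum>m\<le>k. ?B m * matpow N M m i l * M l j)"
    using Suc.IH by (simp add: sum_distrib_right)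
  also have "\<dots> = (\<Sum>m\<le>k. ?B m * matpow N M (Suc m) i j)"
    by (subst sum.swap) (simp add: sum_distrib_left mult.assoc)
  finally have "matpow N ?M' (Suc k) i j
      = (\<Sum>m\<le>k. ?B m * matpow N M (Suc m) i j) + c * (\<Sum>m\<le>k. ?B m * matpow N M m i j)"
    using Suc by (simp only: matpow.simps distrib_left sum.distrib delta)
  also have "\<dots> = (\<Sum>m\<le>Suc k. of_nat (Suc k choose m) * c ^ (Suc k - m) * matpow N M m i j)"
    by (rule binomial_sum_Suc[symmetric])
  finally show ?case .
qed

lemma mat_exp_add_diag:
  assumes "j \<le> N"
  shows "mat_exp N (\<lambda>l j. M l j + (if l = j then c else 0)) t i j = exp (c * t) * mat_exp N M t i j"
proof -
  let ?a = "\<lambda>k. t ^ k / fact k * matpow N M k i j"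
  let ?b = "\<lambda>k. (c * t) ^ k /\<^sub>R fact k"
  have "(\<lambda>k. \<Sum>m\<le>k. ?a m * ?b (k - m)) sums (mat_exp N M t i j * exp (c * t))"
    using Cauchy_product_sums[OF summable_mat_exp_series[OF assms] summable_norm_exp]
    by (simp add: mat_exp_def exp_def)
  moreover have "(\<Sum>m\<le>k. ?a m * ?b (k - m))
      = t ^ k / fact k * matpow N (\<lambda>l j. M l j + (if l = j then c else 0)) k i j" for k
  proof -
    have "?a m * ?b (k - m) = t ^ k / fact k * (of_nat (k choose m) * c ^ (k - m) * matpow N M m i j)"
      if m: "m \<le> k" for m
    proof -
      obtain d where "k = m + d" using le_Suc_ex[OF m] by blast
      then show ?thesis by (simp add: binomial_fact power_add power_mult_distrib field_simps)
    qed
    then show ?thesis by (simp add: matpow_add_diag[OF assms] sum_distrib_left)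
  qed
  ultimately show ?thesis
    by (simp add: mat_exp_def sums_iff mult.commute)
qed

lemma matpow_nonneg:
  assumes "\<And>l j. l \<le> N \<Longrightarrow> j \<le> N \<Longrightarrow> M l j \<ge> 0" and "j \<le> N"
  shows "matpow N M k i j \<ge> 0"
  using assms(2) by (induction k arbitrary: j) (auto intro!: sum_nonneg mult_nonneg_nonneg assms(1))

lemma mat_exp_nonneg:
  assumes off_diag: "\<And>l j. l \<le> N \<Longrightarrow> j \<le> N \<Longrightarrow> l \<noteq> j \<Longrightarrow> M l j \<ge> 0"
    and "t \<ge> 0" and "j \<le> N"
  shows "mat_exp N M t i j \<ge> 0"
proof -
  obtain c where c: "\<And>l j. l \<le> N \<Longrightarrow> j \<le> N \<Longrightarrow> \<bar>M l j\<bar> \<le> c"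
    using matrix_block_bounded[of N M] by blast
  let ?M' = "\<lambda>l j. M l j + (if l = j then c else 0)"
  have "?M' l j \<ge> 0" if "l \<le> N" "j \<le> N" for l j
    using off_diag[OF that] c[OF that] by auto
  then have "mat_exp N ?M' t i j \<ge> 0"
    unfolding mat_exp_def
    using summable_norm_cancel[OF summable_mat_exp_series[OF \<open>j \<le> N\<close>]] \<open>t \<ge> 0\<close> \<open>j \<le> N\<close>
    by (intro suminf_nonneg mult_nonneg_nonneg matpow_nonneg) auto
  then show ?thesis
    unfolding mat_exp_add_diag[OF \<open>j \<le> N\<close>] by (simp add: zero_le_mult_iff)
qed

lemma mat_exp_drift_integral_le:
  fixes M :: "nat \<Rightarrow> nat \<Rightarrow> real" and f h :: "nat \<Rightarrow> real"
  assumes off_diag: "\<And>l j. l \<le> N \<Longrightarrow> j \<le> N \<Longrightarrow> l \<noteq> j \<Longrightarrow> M l j \<ge> 0"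
    and drift: "\<And>l. l \<le> N \<Longrightarrow> (\<Sum>j\<in>{0..N}. M l j * h j) \<le> - f l"
    and h_nonneg: "\<And>j. j \<le> N \<Longrightarrow> h j \<ge> 0"
    and "i \<le> N" and "T \<ge> 0"
  shows "integral {0..T} (\<lambda>t. \<Sum>j\<in>{0..N}. f j * mat_exp N M t i j) \<le> h i"
proof -
  let ?P = "\<lambda>t j. mat_exp N M t i j"
  define g where "g t = (\<Sum>j\<in>{0..N}. ?P t j * h j)" for t
  define g' where "g' t = (\<Sum>l\<in>{0..N}. ?P t l * (\<Sum>j\<in>{0..N}. M l j * h j))" for t
  have P_nonneg: "?P t l \<ge> 0" if "t \<ge> 0" "l \<le> N" for t l
    by (rule mat_exp_nonneg[OF off_diag that])
  have "(g has_real_derivative g' t) (at t)" for t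
  proof -
    have "(g has_real_derivative (\<Sum>j\<in>{0..N}. (\<Sum>l\<in>{0..N}. ?P t l * M l j) * h j)) (at t)"
      unfolding g_def by (intro DERIV_sum DERIV_cmult_right mat_exp_has_derivative) auto
    also have "(\<Sum>j\<in>{0..N}. (\<Sum>l\<in>{0..N}. ?P t l * M l j) * h j) = g' t"
      unfolding g'_def sum_distrib_right sum_distrib_left by (subst sum.swap) (simp add: mult.assoc)
    finally show ?thesis .
  qed
  then have "(g' has_integral g T - g 0) {0..T}"
    using \<open>T \<ge> 0\<close> by (intro fundamental_theorem_of_calculus)
      (auto simp: has_real_derivative_iff_has_vector_derivative[symmetric] intro: has_field_derivative_at_within)
  then have neg: "((\<lambda>t. - g' t) has_integral g 0 - g T) {0..T}"
    using has_integral_neg by force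
  have "((\<lambda>t. \<Sum>j\<in>{0..N}. f j * ?P t j) has_integral integral {0..T} (\<lambda>t. \<Sum>j\<in>{0..N}. f j * ?P t j)) {0..T}"
    by (intro integrable_integral integrable_continuous_interval continuous_intros continuous_on_mat_exp) auto
  moreover note neg
  moreover have "(\<Sum>j\<in>{0..N}. f j * ?P t j) \<le> - g' t" if "t \<in> {0..T}" for t
  proof -
    have "g' t \<le> (\<Sum>l\<in>{0..N}. ?P t l * - f l)"
      unfolding g'_def using that by (intro sum_mono mult_left_mono drift P_nonneg) auto
    then show ?thesis by (simp add: sum_negf mult.commute)
  qed
  ultimately have "integral {0..T} (\<lambda>t. \<Sum>j\<in>{0..N}. f j * ?P t j) \<le> g 0 - g T"
    by (rule has_integral_le)
  moreover have "g T \<ge> 0"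
    unfolding g_def using \<open>T \<ge> 0\<close> by (intro sum_nonneg mult_nonneg_nonneg P_nonneg h_nonneg) auto
  moreover have "g 0 = (\<Sum>j\<in>{0..N}. if j = i then h j else 0)"
    unfolding g_def by (intro sum.cong) (auto simp: mat_exp_0)
  ultimately show ?thesis
    using \<open>i \<le> N\<close> by simp
qed

lemma nn_integral_atLeast_0_le:
  fixes f :: "real \<Rightarrow> real"
  assumes cont: "continuous_on UNIV f" and nonneg: "\<And>t. t \<ge> 0 \<Longrightarrow> f t \<ge> 0"
    and bound: "\<And>T. T \<ge> 0 \<Longrightarrow> integral {0..T} f \<le> B"
  shows "(\<integral>\<^sup>+t. ennreal (f t) * indicator {0..} t \<partial>lborel) \<le> ennreal B"
proof -
  let ?f = "\<lambda>(n::nat) t. ennreal (f t) * indicator {0..real n} t"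
  have meas: "f \<in> borel_measurable borel"
    by (rule borel_measurable_continuous_onI[OF cont])
  have "(SUP n. ?f n t) = ennreal (f t) * indicator {0..} t" for t
  proof (rule LIMSEQ_unique[OF LIMSEQ_SUP])
    obtain n :: nat where "t < real n"
      using reals_Archimedean2 by blast
    then have "eventually (\<lambda>n. ?f n t = ennreal (f t) * indicator {0..} t) sequentially"
      by (auto simp: frequently_def intro!: eventually_sequentiallyI[where c=n] split: split_indicator)
    then show "(\<lambda>n. ?f n t) \<longlonglongrightarrow> ennreal (f t) * indicator {0..} t"
      by (rule tendsto_eventually)
  qed (auto simp: nonneg incseq_def le_fun_def split: split_indicator)
  then have "(\<integral>\<^sup>+t. ennreal (f t) * indicator {0..} t \<partial>lborel) = (\<integral>\<^sup>+t. (SUP n. ?f n t) \<partial>lborel)"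
    by simp
  also have "\<dots> = (SUP n. \<integral>\<^sup>+t. ?f n t \<partial>lborel)"
    using meas nonneg
    by (intro nn_integral_monotone_convergence_SUP) (auto simp: incseq_def le_fun_def split: split_indicator)
  also have "\<dots> \<le> ennreal B"
  proof (rule SUP_least)
    fix n :: nat
    have "(f has_integral integral {0..real n} f) {0..real n}"
      by (intro integrable_integral integrable_continuous_interval continuous_on_subset[OF cont]) auto
    then have "(\<integral>\<^sup>+t. ?f n t \<partial>lborel) = ennreal (integral {0..real n} f)"
      using nonneg by (intro nn_integral_has_integral_lebesgue') auto
    also have "\<dots> \<le> ennreal B"
      using bound[of "real n"] by (intro ennreal_leI) auto
    finally show "(\<integral>\<^sup>+t. ?f n t \<partial>lborel) \<le> ennreal B" .
  qed
  finally show ?thesis .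
qed

lemma mat_exp_occupation_le:
  fixes M :: "nat \<Rightarrow> nat \<Rightarrow> real" and f h :: "nat \<Rightarrow> real"
  assumes off_diag: "\<And>l j. l \<le> N \<Longrightarrow> j \<le> N \<Longrightarrow> l \<noteq> j \<Longrightarrow> M l j \<ge> 0"
    and drift: "\<And>l. l \<le> N \<Longrightarrow> (\<Sum>j\<in>{0..N}. M l j * h j) \<le> - f l"
    and h_nonneg: "\<And>j. j \<le> N \<Longrightarrow> h j \<ge> 0"
    and f_nonneg: "\<And>j. j \<le> N \<Longrightarrow> f j \<ge> 0"
    and "i \<le> N"
  shows "(\<integral>\<^sup>+t. ennreal (\<Sum>j\<in>{0..N}. f j * mat_exp N M t i j) * indicator {0..} t \<partial>lborel) \<le> ennreal (h i)"
proof (rule nn_integral_atLeast_0_le)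
  show "continuous_on UNIV (\<lambda>t. \<Sum>j\<in>{0..N}. f j * mat_exp N M t i j)"
    by (intro continuous_intros continuous_on_mat_exp) auto
  show "(\<Sum>j\<in>{0..N}. f j * mat_exp N M t i j) \<ge> 0" if "t \<ge> 0" for t
    using that by (intro sum_nonneg mult_nonneg_nonneg f_nonneg mat_exp_nonneg off_diag) auto
  show "integral {0..T} (\<lambda>t. \<Sum>j\<in>{0..N}. f j * mat_exp N M t i j) \<le> h i" if "T \<ge> 0" for T
    by (rule mat_exp_drift_integral_le[OF off_diag drift h_nonneg \<open>i \<le> N\<close> that])
qed

lemma birth_rate_nonneg:
  assumes "a \<ge> 0" and "l \<le> N"
  shows "birth_rate N a l \<ge> 0"
proof -
  have falling: "real m * (real m - 1) \<ge> 0" for m :: nat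
    by (cases m) auto
  show ?thesis
    unfolding birth_rate_def using assms falling[of N] mult_nonneg_nonneg[OF falling[of l], of "real N - real l"]
    by (intro divide_nonneg_nonneg mult_nonneg_nonneg[of a]) auto
qed

lemma birth_rate_N: "birth_rate N a N = 0"
  by (simp add: birth_rate_def)

lemma birth_rate_le:
  assumes "N \<ge> 2" and "a \<ge> 0" and "l \<le> N"
  shows "birth_rate N a l \<le> real l * (a / 4)"
proof (cases "l = 0")
  case True
  then show ?thesis by (simp add: birth_rate_def)
next
  case False
  have "4 * ((real l - 1) * (real N - real l)) \<le> (real N - 1)\<^sup>2"
    using sum_squares_ge_zero[of "(real l - 1) - (real N - real l)" 0]
    by (simp add: power2_eq_square algebra_simps)
  also have "\<dots> \<le> real N * (real N - 1)"
    using assms by (simp add: power2_eq_square)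
  finally have am_gm: "4 * ((real l - 1) * (real N - real l)) \<le> real N * (real N - 1)" .
  have "a * (real l * (real l - 1) * (real N - real l)) \<le> real l * (a / 4) * (real N * (real N - 1))"
    using mult_left_mono[OF am_gm, of "real l * a"] assms by (simp add: algebra_simps)
  moreover have "real N * (real N - 1) > 0"
    using assms by simp
  ultimately show ?thesis
    unfolding birth_rate_def by (simp add: divide_le_eq)
qed

lemma gen_off_diag_nonneg:
  assumes "a \<ge> 0" and "l \<le> N" and "l \<noteq> j"
  shows "gen N a l j \<ge> 0"
  using assms birth_rate_nonneg[OF assms(1,2)] by (auto simp: gen_def death_rate_def)

lemma sum_gen_mult_eq:
  assumes "l \<le> N"
  shows "(\<Sum>j\<in>{0..N}. gen N a l j * h j)
    = birth_rate N a l * (h (Suc l) - h l) - death_rate l * (h l - h (l - 1))"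
proof -
  let ?b = "birth_rate N a l" and ?d = "death_rate l"
  have "(\<Sum>j\<in>{0..N}. gen N a l j * h j) = (\<Sum>j\<in>{0..N}. (if j = Suc l then ?b * h j else 0)
      + (if j = l - 1 then (if 0 < l then ?d * h j else 0) else 0) + (if j = l then - (?b + ?d) * h j else 0))"
    using assms by (intro sum.cong refl) (auto simp: gen_def)
  also have "\<dots> = (if Suc l \<le> N then ?b * h (Suc l) else 0) + (if 0 < l then ?d * h (l - 1) else 0)
      - (?b + ?d) * h l"
    using assms by (simp add: sum.distrib) (auto simp: algebra_simps)
  also have "\<dots> = ?b * (h (Suc l) - h l) - ?d * (h l - h (l - 1))"
    using assms birth_rate_N by (cases "l = N") (auto simp: death_rate_def algebra_simps)
  finally show ?thesis .
qed

definition lyapunov :: "nat \<Rightarrow> real \<Rightarrow> nat \<Rightarrow> real" where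
  "lyapunov N a j = (\<Sum>k\<in>{1..j}. \<Sum>m\<le>N - k. (a / 4) ^ m)"

lemma lyapunov_nonneg: "a \<ge> 0 \<Longrightarrow> lyapunov N a j \<ge> 0"
  unfolding lyapunov_def by (intro sum_nonneg) auto

lemma lyapunov_increments:
  "lyapunov N a (Suc l) - lyapunov N a l = (\<Sum>m\<le>N - Suc l. (a / 4) ^ m)"
  by (simp add: lyapunov_def)

lemma gen_lyapunov_le:
  assumes "N \<ge> 2" and "a \<ge> 0" and "l \<le> N"
  shows "(\<Sum>j\<in>{0..N}. gen N a l j * lyapunov N a j) \<le> - real l"
proof (cases l)
  case 0
  then show ?thesis by (simp add: sum_gen_mult_eq birth_rate_def death_rate_def)
next
  case (Suc l')
  let ?D = "\<lambda>n. \<Sum>m\<le>n. (a / 4) ^ m"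
  have drift: "(\<Sum>j\<in>{0..N}. gen N a l j * lyapunov N a j) = birth_rate N a l * ?D (N - Suc l) - real l * ?D (N - l)"
    unfolding sum_gen_mult_eq[OF assms(3)]
    using lyapunov_increments[of N a l] lyapunov_increments[of N a l'] Suc by (simp add: death_rate_def)
  show ?thesis
  proof (cases "l = N")
    case True
    then show ?thesis unfolding drift by (simp add: birth_rate_N)
  next
    case False
    then have "?D (N - l) = 1 + (a / 4) * ?D (N - Suc l)"
      using assms(3) by (simp add: Suc_diff_Suc[symmetric] sum.atMost_Suc_shift sum_distrib_left del: sum.atMost_Suc)
    moreover have "birth_rate N a l * ?D (N - Suc l) \<le> real l * (a / 4) * ?D (N - Suc l)"
      using assms by (intro mult_right_mono birth_rate_le sum_nonneg) auto
    ultimately show ?thesis unfolding drift by (simp add: algebra_simps)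
  qed
qed

lemma lyapunov_N_le:
  assumes "a \<ge> 0"
  shows "lyapunov N a N \<le> (\<Sum>j\<in>{1..N}. \<Sum>i\<in>{0..j}. (a / 4) ^ i)"
proof -
  have "lyapunov N a N = (\<Sum>k\<in>{1..N}. \<Sum>m\<le>N + 1 - k - 1. (a / 4) ^ m)"
    unfolding lyapunov_def by simp
  also have "\<dots> = (\<Sum>k\<in>{1..N}. \<Sum>m\<le>k - 1. (a / 4) ^ m)"
    by (subst sum.atLeastAtMost_rev) (intro sum.cong refl, simp)
  also have "\<dots> \<le> (\<Sum>j\<in>{1..N}. \<Sum>i\<in>{0..j}. (a / 4) ^ i)"
    using assms by (intro sum_mono sum_mono2) auto
  finally show ?thesis .
qed

lemma sum_occ_time_eq:
  assumes "a \<ge> 0"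
  shows "(\<Sum>j\<in>{1..N}. of_nat j * occ_time N a j)
    = (\<integral>\<^sup>+t. ennreal (\<Sum>j\<in>{0..N}. real j * trans_prob N a t N j) * indicator {0..} t \<partial>lborel)"
proof -
  let ?p = "\<lambda>j t. ennreal (trans_prob N a t N j) * indicator {0..} t"
  have meas: "?p j \<in> borel_measurable lborel" if "j \<le> N" for j
  proof -
    have "(\<lambda>t. trans_prob N a t N j) \<in> borel_measurable borel"
      unfolding trans_prob_eq_mat_exp by (rule borel_measurable_continuous_onI[OF continuous_on_mat_exp[OF that]])
    then show ?thesis by measurable
  qed
  have "(\<Sum>j\<in>{1..N}. of_nat j * occ_time N a j) = (\<Sum>j\<in>{1..N}. \<integral>\<^sup>+t. of_nat j * ?p j t \<partial>lborel)"
    unfolding occ_time_def using meas by (intro sum.cong refl nn_integral_cmult[symmetric]) auto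
  also have "\<dots> = (\<integral>\<^sup>+t. (\<Sum>j\<in>{1..N}. of_nat j * ?p j t) \<partial>lborel)"
    using meas by (intro nn_integral_sum[symmetric]) auto
  also have "\<dots> = (\<integral>\<^sup>+t. ennreal (\<Sum>j\<in>{0..N}. real j * trans_prob N a t N j) * indicator {0..} t \<partial>lborel)"
  proof (intro nn_integral_cong)
    fix t :: real
    have "(\<Sum>j\<in>{1..N}. of_nat j * ?p j t)
        = (\<Sum>j\<in>{1..N}. ennreal (real j * trans_prob N a t N j)) * indicator {0..} t"
      by (simp add: sum_distrib_left ennreal_mult' ennreal_of_nat_eq_real_of_nat mult_ac)
    also have "\<dots> = ennreal (\<Sum>j\<in>{0..N}. real j * trans_prob N a t N j) * indicator {0..} t"
    proof (cases "t \<ge> 0")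
      case True
      have "trans_prob N a t N j \<ge> 0" if "j \<le> N" for j
        unfolding trans_prob_eq_mat_exp using True that assms by (intro mat_exp_nonneg gen_off_diag_nonneg) auto
      then show ?thesis
        by (subst sum_ennreal) (auto simp: sum.atLeast_Suc_atMost)
    qed simp
    finally show "(\<Sum>j\<in>{1..N}. of_nat j * ?p j t)
        = ennreal (\<Sum>j\<in>{0..N}. real j * trans_prob N a t N j) * indicator {0..} t" .
  qed
  finally show ?thesis .
qed

theorem lemma5p1:
  fixes N :: nat and a :: real
  assumes "N \<ge> 2" and "a \<ge> 0"
  shows "(\<Sum>j\<in>{1..N}. of_nat j * occ_time N a j)
           \<le> ennreal (\<Sum>j\<in>{1..N}. \<Sum>i\<in>{0..j}. (a / 4) ^ i)"
proof -
  have "(\<Sum>j\<in>{1..N}. of_nat j * occ_time N a j)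
      = (\<integral>\<^sup>+t. ennreal (\<Sum>j\<in>{0..N}. real j * mat_exp N (gen N a) t N j) * indicator {0..} t \<partial>lborel)"
    using sum_occ_time_eq[OF assms(2)] by (simp add: trans_prob_eq_mat_exp)
  also have "\<dots> \<le> ennreal (lyapunov N a N)"
    using assms by (intro mat_exp_occupation_le gen_off_diag_nonneg gen_lyapunov_le lyapunov_nonneg) auto
  also have "\<dots> \<le> ennreal (\<Sum>j\<in>{1..N}. \<Sum>i\<in>{0..j}. (a / 4) ^ i)"
    using assms by (intro ennreal_leI lyapunov_N_le)
  finally show ?thesis .
qed

end
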